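(* Let $p$ be a $\mathrm{Beta}(\alpha,\beta)$ random variable with $\alpha\ge1$ and $\beta\ge1$, and let $b$ be distributed, conditionally on $p$, as $\mathrm{Bern}(p)$. Let $\delta=1/m$ for an integer $m\ge 2$ and define $q=\lceil p/\delta\rceil$. Then $$\mathbb{I}(p; b) \geq \mathbb{I}(q; b) \geq \mathbb{I}(p; b) - \max \left \{ 3, \log \frac{1}{\delta} \right \} \delta.$$
   Context: $\mathbb{I}(\cdot;\cdot)$ denotes mutual information (natural logarithm). *)

theory Defs
  imports "HOL-Probability.Probability"
begin

definition beta_density :: "real \<Rightarrow> real \<Rightarrow> real \<Rightarrow> real" where
  "beta_density a b x =
     (if 0 < x \<and> x < 1 then x powr (a - 1) * (1 - x) powr (b - 1) / Beta a b else 0)"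

end

theory Submission
  imports Defs
begin

text \<open>
  Write \<open>f\<close> for the density of \<open>p\<close> and \<open>\<mu>\<close> for its mean. Then \<open>I(p;b)\<close> is the integral of
  \<open>f x \<cdot> (x ln (x/\<mu>) + (1-x) ln ((1-x)/(1-\<mu>)))\<close>, while \<open>I(q;b)\<close> is the sum over the bins
  \<open>((k-1)/m, k/m]\<close> of \<open>S ln (S/(P\<mu>)) + T ln (T/(P(1-\<mu>)))\<close>, where \<open>P\<close>, \<open>S\<close>, \<open>T\<close> are the
  integrals of \<open>f\<close>, \<open>f x \<cdot> x\<close> and \<open>f x \<cdot> (1-x)\<close> over the bin. On every bin the log-sum
  inequality bounds each binned term from above by the corresponding integral, and since the weights
  \<open>x\<close> and \<open>1-x\<close> vary by at most \<open>1/m\<close> on a bin, each integral exceeds its binned term by at most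
  \<open>P/m\<close>. Summing over bins gives \<open>I(p;b) - 2/m \<le> I(q;b) \<le> I(p;b)\<close>. The hypothesis
  \<open>\<alpha>, \<beta> \<ge> 1\<close> makes the Beta density bounded, which settles all integrability questions.
\<close>

lemma mult_ln_le_mult_ln_self:
  fixes w r :: real
  assumes "0 < w" "0 < r"
  shows "w * ln r + w - r \<le> w * ln w"
proof -
  have "ln (r / w) \<le> r / w - 1"
    using assms by (intro ln_le_minus_one) simp
  then have "w * (ln r - ln w) \<le> w * (r / w - 1)"
    using assms by (intro mult_left_mono) (auto simp: ln_div)
  then show ?thesis
    using assms by (simp add: algebra_simps)
qed

lemma abs_mult_ln_divide_le:
  fixes x c :: real
  assumes "0 < x" "x < 1" "0 < c"
  shows "\<bar>x * ln (x / c)\<bar> \<le> 1 + \<bar>ln c\<bar>"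
proof -
  have "x * ln x \<le> 0"
    using assms by (intro mult_nonneg_nonpos) auto
  moreover have "-1 \<le> x * ln x"
    using mult_ln_le_mult_ln_self[of x 1] assms by simp
  moreover have "\<bar>x * ln c\<bar> \<le> \<bar>ln c\<bar>"
    using assms by (simp add: abs_mult mult_left_le_one_le)
  moreover have "x * ln (x / c) = x * ln x - x * ln c"
    using assms by (simp add: ln_div algebra_simps)
  ultimately show ?thesis
    by linarith
qed

lemma log_sum_integral_ge:
  fixes N :: "'x measure" and g w :: "'x \<Rightarrow> real" and c :: real
  defines "P \<equiv> integral\<^sup>L N g" and "S \<equiv> \<integral>x. g x * w x \<partial>N"
  assumes "integrable N g" "integrable N (\<lambda>x. g x * w x)"
    and "integrable N (\<lambda>x. g x * (w x * ln (w x / c)))"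
    and g_nonneg: "\<And>x. 0 \<le> g x" and w_pos: "\<And>x. g x \<noteq> 0 \<Longrightarrow> 0 < w x"
    and "0 < c" and "0 < P" and "0 < S"
  shows "S * ln (S / (P * c)) \<le> (\<integral>x. g x * (w x * ln (w x / c)) \<partial>N)"
proof -
  \<comment> \<open>Gibbs' inequality pointwise, against the average ratio \<open>r = S/P\<close>\<close>
  define r where "r = S / P"
  have "0 < r"
    using assms by (simp add: r_def)
  have pointwise: "g x * w x * ln (r / c) + g x * w x - r * g x \<le> g x * (w x * ln (w x / c))" for x
  proof (cases "g x = 0")
    case False
    then have "0 < w x"
      by (rule w_pos)
    then have "w x * ln (r / c) + w x - r \<le> w x * ln (w x / c)"
      using mult_ln_le_mult_ln_self[of "w x" r] \<open>0 < r\<close> \<open>0 < c\<close> by (simp add: ln_div algebra_simps)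
    then have "g x * (w x * ln (r / c) + w x - r) \<le> g x * (w x * ln (w x / c))"
      using g_nonneg by (intro mult_left_mono) auto
    then show ?thesis
      by (simp add: algebra_simps)
  qed simp
  have "S * ln (S / (P * c)) = S * ln (r / c) + S - r * P"
    using assms by (simp add: r_def field_simps)
  also have "\<dots> = (\<integral>x. g x * w x * ln (r / c) + g x * w x - r * g x \<partial>N)"
    using assms by simp
  also have "\<dots> \<le> (\<integral>x. g x * (w x * ln (w x / c)) \<partial>N)"
    using assms pointwise by (intro integral_mono) auto
  finally show ?thesis .
qed

lemma log_sum_integral_le:
  fixes N :: "'x measure" and g w :: "'x \<Rightarrow> real" and c W d :: real
  defines "P \<equiv> integral\<^sup>L N g" and "S \<equiv> \<integral>x. g x * w x \<partial>N"
  assumes "integrable N g" "integrable N (\<lambda>x. g x * w x)"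
    and "integrable N (\<lambda>x. g x * (w x * ln (w x / c)))"
    and g_nonneg: "\<And>x. 0 \<le> g x"
    and w_bounds: "\<And>x. g x \<noteq> 0 \<Longrightarrow> 0 < w x \<and> w x \<le> W \<and> W - w x \<le> d"
    and "0 < c" and "0 < W" and "0 < P" and "0 < S"
  shows "(\<integral>x. g x * (w x * ln (w x / c)) \<partial>N) \<le> S * ln (S / (P * c)) + d * P"
proof -
  have below_W: "g x * (w x * ln (w x / c)) \<le> g x * w x * ln (W / c)" for x
  proof (cases "g x = 0")
    case False
    then have "0 < w x" "w x \<le> W"
      using w_bounds by blast+
    then have "w x * ln (w x / c) \<le> w x * ln (W / c)"
      using \<open>0 < c\<close> by (intro mult_left_mono) (auto simp: divide_right_mono)
    then show ?thesis
      using mult_left_mono[OF _ g_nonneg[of x]] by (simp add: mult.assoc)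
  qed simp
  have gap: "g x * (W - w x) \<le> g x * d" for x
    using w_bounds[of x] g_nonneg[of x] by (cases "g x = 0") (auto intro: mult_left_mono)
  have "S * ln (W * P / S) \<le> W * P - S"
    using mult_left_mono[OF ln_le_minus_one[of "W * P / S"], of S] assms by (simp add: field_simps)
  also have "\<dots> = (\<integral>x. g x * (W - w x) \<partial>N)"
    using assms by (simp add: algebra_simps)
  also have "\<dots> \<le> (\<integral>x. g x * d \<partial>N)"
    using assms gap by (intro integral_mono) (auto simp: algebra_simps)
  also have "\<dots> = d * P"
    by (simp add: P_def)
  finally have W_excess: "S * ln (W / c) \<le> S * ln (S / (P * c)) + d * P"
    using assms by (simp add: ln_div ln_mult algebra_simps)
  have "(\<integral>x. g x * (w x * ln (w x / c)) \<partial>N) \<le> (\<integral>x. g x * w x * ln (W / c) \<partial>N)"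
    using assms below_W by (intro integral_mono) auto
  also have "\<dots> = S * ln (W / c)"
    by (simp add: S_def)
  finally show ?thesis
    using W_excess by linarith
qed

lemma integrable_bounded_on_unit_interval:
  fixes g :: "real \<Rightarrow> real"
  assumes "g \<in> borel_measurable borel" "\<And>x. \<bar>g x\<bar> \<le> B" "\<And>x. g x \<noteq> 0 \<Longrightarrow> 0 < x \<and> x < 1"
  shows "integrable lborel g"
proof (rule integrableI_bounded_set[where A="{0<..<1}" and B=B])
  show "AE x in lborel. x \<notin> {0<..<1} \<longrightarrow> g x = 0"
    using assms(3) by force
qed (use assms in auto)

lemma integral_pos_of_pos_on_interval:
  fixes g :: "real \<Rightarrow> real"
  assumes "integrable lborel g" "\<And>x. 0 \<le> g x" "\<And>x. a < x \<Longrightarrow> x < b \<Longrightarrow> 0 < g x" "a < b"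
  shows "0 < integral\<^sup>L lborel g"
proof -
  have "integral\<^sup>L lborel g \<noteq> 0"
  proof
    assume "integral\<^sup>L lborel g = 0"
    then have "AE x in lborel. g x = 0"
      using assms by (subst (asm) integral_nonneg_eq_0_iff_AE) auto
    then have "AE x in lborel. x \<notin> {a<..<b}"
      by eventually_elim (use assms in force)
    then have "{a<..<b} \<in> null_sets lborel"
      by (subst AE_iff_null_sets) auto
    then show False
      using assms by (auto simp: null_sets_def)
  qed
  moreover have "0 \<le> integral\<^sup>L lborel g"
    using assms by simp
  ultimately show ?thesis
    by simp
qed

lemma integral_pair_count_space_finite:
  fixes g :: "'a \<Rightarrow> 'b::finite \<Rightarrow> real"
  assumes "sigma_finite_measure M"
    and [measurable]: "(\<lambda>z. g (fst z) (snd z)) \<in> borel_measurable (M \<Otimes>\<^sub>M count_space UNIV)"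
    and "\<And>t. integrable M (\<lambda>x. g x t)"
  shows "(\<integral>z. g (fst z) (snd z) \<partial>(M \<Otimes>\<^sub>M count_space UNIV)) = (\<Sum>t\<in>UNIV. \<integral>x. g x t \<partial>M)"
proof -
  interpret pair_sigma_finite M "count_space (UNIV :: 'b set)"
    by (intro pair_sigma_finite.intro assms(1) sigma_finite_measure_count_space_finite) simp
  have "integrable (M \<Otimes>\<^sub>M count_space UNIV) (\<lambda>z. g (fst z) (snd z))"
    by (rule Fubini_integrable) (use assms in \<open>auto simp: lebesgue_integral_count_space_finite integrable_count_space\<close>)
  then have "(\<integral>z. g (fst z) (snd z) \<partial>(M \<Otimes>\<^sub>M count_space UNIV)) = (\<integral>x. (\<integral>t. g x t \<partial>count_space UNIV) \<partial>M)"
    by (subst integral_fst'[symmetric]) auto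
  also have "\<dots> = (\<Sum>t\<in>UNIV. \<integral>x. g x t \<partial>M)"
    using assms by (simp add: lebesgue_integral_count_space_finite)
  finally show ?thesis .
qed

lemma integral_count_space_eq_sum:
  fixes g :: "'a \<Rightarrow> real"
  assumes "finite S" "\<And>z. z \<notin> S \<Longrightarrow> g z = 0"
  shows "(\<integral>z. g z \<partial>count_space UNIV) = (\<Sum>z\<in>S. g z)"
proof -
  have "{z \<in> UNIV. g z \<noteq> 0} \<subseteq> S"
    using assms by blast
  then have "(\<integral>z. g z \<partial>count_space UNIV) = (\<Sum>z | z \<in> UNIV \<and> g z \<noteq> 0. g z)"
    using assms by (intro lebesgue_integral_count_space_finite_support) (auto intro: finite_subset)
  also have "\<dots> = (\<Sum>z\<in>S. g z)"
    using assms by (intro sum.mono_neutral_left) auto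
  finally show ?thesis .
qed

lemma distributed_count_spaceI:
  fixes X :: "'a \<Rightarrow> 'b::countable"
  assumes "prob_space M" and X: "X \<in> measurable M (count_space UNIV)"
    and P: "\<And>a. measure M {\<omega>\<in>space M. X \<omega> = a} = P a" and "\<And>a. 0 \<le> P a"
  shows "distributed M (count_space UNIV) X P"
  unfolding distributed_def
proof (intro conjI)
  interpret prob_space M by fact
  show "distr M (count_space UNIV) X = density (count_space UNIV) P"
  proof (rule measure_eqI_countable[where A=UNIV])
    fix a :: 'b
    have "emeasure (distr M (count_space UNIV) X) {a} = emeasure M {\<omega>\<in>space M. X \<omega> = a}"
      using X by (simp add: emeasure_distr vimage_def Int_def conj_commute)
    also have "\<dots> = emeasure (density (count_space UNIV) P) {a}"
      using P[of a] assms(4) by (simp add: emeasure_eq_measure emeasure_density)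
    finally show "emeasure (distr M (count_space UNIV) X) {a} = emeasure (density (count_space UNIV) P) {a}" .
  qed auto
qed (use X in auto)

section \<open>Binning the unit interval\<close>

definition bin :: "nat \<Rightarrow> int \<Rightarrow> real set" where
  "bin m k = {(of_int k - 1) / real m <.. of_int k / real m}"

lemma bin_borel [measurable]: "bin m k \<in> sets borel"
  unfolding bin_def by simp

lemma mem_bin_iff:
  assumes "0 < m"
  shows "x \<in> bin m k \<longleftrightarrow> \<lceil>x * real m\<rceil> = k"
  using assms by (simp add: bin_def field_simps ceiling_eq_iff)

lemma ceiling_mult_in_range:
  fixes x :: real and m :: nat
  assumes "0 < m" "0 < x" "x \<le> 1"
  shows "\<lceil>x * real m\<rceil> \<in> {1..int m}"
proof -
  have "0 < x * real m" "x * real m \<le> real m"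
    using assms by (simp_all add: mult_left_le_one_le)
  then show ?thesis
    by (auto simp: ceiling_le_iff zero_less_ceiling)
qed

lemma bin_interior:
  fixes x :: real
  assumes "k \<in> {1..int m}" "(of_int k - 1) / real m < x" "x < of_int k / real m"
  shows "0 < x \<and> x < 1 \<and> x \<in> bin m k"
proof -
  have "0 < m"
    using assms by (cases "m = 0") auto
  have "0 \<le> (of_int k - 1) / real m"
    using assms(1) by simp
  moreover have "of_int k / real m \<le> 1"
    using assms(1) \<open>0 < m\<close> by (simp add: field_simps)
  ultimately have "0 < x" "x < 1"
    using assms by linarith+
  then show ?thesis
    using assms by (simp add: bin_def)
qed

lemma sum_indicator_bin:
  assumes "0 < m" "0 < x" "x < 1"
  shows "(\<Sum>k\<in>{1..int m}. indicator (bin m k) x :: real) = 1"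
  using ceiling_mult_in_range[of m x] assms
  by (simp add: indicator_def mem_bin_iff)

lemma integral_eq_sum_bins:
  fixes g :: "real \<Rightarrow> real"
  assumes "0 < m" "integrable lborel g" "\<And>x. g x \<noteq> 0 \<Longrightarrow> 0 < x \<and> x < 1"
  shows "integral\<^sup>L lborel g = (\<Sum>k\<in>{1..int m}. \<integral>x. g x * indicator (bin m k) x \<partial>lborel)"
proof -
  have "g x = (\<Sum>k\<in>{1..int m}. g x * indicator (bin m k) x)" for x
    using assms sum_indicator_bin[of m x] by (cases "g x = 0") (auto simp flip: sum_distrib_left)
  then have "integral\<^sup>L lborel g = (\<integral>x. (\<Sum>k\<in>{1..int m}. g x * indicator (bin m k) x) \<partial>lborel)"
    by (intro Bochner_Integration.integral_cong) auto
  also have "\<dots> = (\<Sum>k\<in>{1..int m}. \<integral>x. g x * indicator (bin m k) x \<partial>lborel)"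
    by (rule Bochner_Integration.integral_sum) (use assms in \<open>simp add: integrable_real_mult_indicator\<close>)
  finally show ?thesis .
qed

section \<open>Bounded densities on the unit interval\<close>

definition bernoulli_prob :: "real \<Rightarrow> bool \<Rightarrow> real" where
  "bernoulli_prob x t = (if t then x else 1 - x)"

lemma bernoulli_prob_measurable [measurable]: "(\<lambda>x. bernoulli_prob x t) \<in> borel_measurable borel"
  by (simp add: bernoulli_prob_def)

lemma bernoulli_prob_pos:
  "0 < x \<Longrightarrow> x < 1 \<Longrightarrow> 0 < bernoulli_prob x t"
  by (simp add: bernoulli_prob_def)

lemma bernoulli_prob_less_1:
  "0 < x \<Longrightarrow> x < 1 \<Longrightarrow> bernoulli_prob x t < 1"
  by (simp add: bernoulli_prob_def)

locale unit_interval_density =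
  fixes f :: "real \<Rightarrow> real" and C :: real
  assumes f_measurable [measurable]: "f \<in> borel_measurable borel"
    and f_nonneg: "0 \<le> f x"
    and f_pos: "0 < x \<Longrightarrow> x < 1 \<Longrightarrow> 0 < f x"
    and f_support: "f x \<noteq> 0 \<Longrightarrow> 0 < x \<and> x < 1"
    and f_le: "f x \<le> C"
    and integral_f: "integral\<^sup>L lborel f = 1"
begin

definition mean :: real where
  "mean = (\<integral>x. f x * x \<partial>lborel)"

definition bin_prob :: "nat \<Rightarrow> int \<Rightarrow> real" where
  "bin_prob m k = (\<integral>x. f x * indicator (bin m k) x \<partial>lborel)"

definition bin_joint_prob :: "nat \<Rightarrow> int \<Rightarrow> bool \<Rightarrow> real" where
  "bin_joint_prob m k t = (\<integral>x. f x * indicator (bin m k) x * bernoulli_prob x t \<partial>lborel)"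

definition info_integrand :: "real \<Rightarrow> bool \<Rightarrow> real" where
  "info_integrand x t = f x * (bernoulli_prob x t * ln (bernoulli_prob x t / bernoulli_prob mean t))"

definition information :: real where
  "information = (\<Sum>t\<in>UNIV. \<integral>x. info_integrand x t \<partial>lborel)"

definition binned_information :: "nat \<Rightarrow> real" where
  "binned_information m = (\<Sum>k\<in>{1..int m}. \<Sum>t\<in>UNIV.
     bin_joint_prob m k t * ln (bin_joint_prob m k t / (bin_prob m k * bernoulli_prob mean t)))"

lemma integrable_density_mult:
  assumes [measurable]: "h \<in> borel_measurable borel"
    and h_bounded: "\<And>x. 0 < x \<Longrightarrow> x < 1 \<Longrightarrow> \<bar>h x\<bar> \<le> B"
  shows "integrable lborel (\<lambda>x. f x * h x)"
proof (rule integrable_bounded_on_unit_interval[where B="C * \<bar>B\<bar>"])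
  show "\<bar>f x * h x\<bar> \<le> C * \<bar>B\<bar>" for x
  proof (cases "f x = 0")
    case True
    then show ?thesis
      using f_le[of x] by simp
  next
    case False
    then have "\<bar>h x\<bar> \<le> \<bar>B\<bar>"
      using f_support h_bounded by force
    then show ?thesis
      using f_nonneg[of x] f_le[of x] by (simp add: abs_mult mult_mono)
  qed
qed (use f_support in auto)

lemma integrable_density_indicator_mult:
  assumes "A \<in> sets borel" "h \<in> borel_measurable borel"
    and "\<And>x. 0 < x \<Longrightarrow> x < 1 \<Longrightarrow> \<bar>h x\<bar> \<le> B"
  shows "integrable lborel (\<lambda>x. f x * indicator A x * h x)"
  using integrable_density_mult[of "\<lambda>x. indicator A x * h x" "\<bar>B\<bar>"] assms
  by (force simp: indicator_def mult.assoc)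

lemma integrable_density_indicator:
  "A \<in> sets borel \<Longrightarrow> integrable lborel (\<lambda>x. f x * indicator A x)"
  using integrable_density_indicator_mult[of A "\<lambda>_. 1" 1] by simp

lemma integrable_density_indicator_bernoulli:
  "A \<in> sets borel \<Longrightarrow> integrable lborel (\<lambda>x. f x * indicator A x * bernoulli_prob x t)"
  by (rule integrable_density_indicator_mult[where B=1]) (auto simp: bernoulli_prob_def)

lemma f_mult_bernoulli_nonneg: "0 \<le> f x * bernoulli_prob x t"
  using f_nonneg[of x] f_support[of x]
  by (cases "f x = 0") (auto intro!: mult_nonneg_nonneg less_imp_le[OF bernoulli_prob_pos])

lemma integral_density_bernoulli_pos:
  "0 < (\<integral>x. f x * bernoulli_prob x t \<partial>lborel)"
  using integrable_density_indicator_bernoulli[of UNIV t]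
  by (intro integral_pos_of_pos_on_interval[where a=0 and b=1])
     (auto simp: f_mult_bernoulli_nonneg f_pos bernoulli_prob_pos)

lemma integral_density_bernoulli:
  "(\<integral>x. f x * bernoulli_prob x t \<partial>lborel) = bernoulli_prob mean t"
proof (cases t)
  case False
  have "(\<integral>x. f x * (1 - x) \<partial>lborel) = (\<integral>x. f x - f x * x \<partial>lborel)"
    by (simp add: algebra_simps)
  also have "\<dots> = 1 - mean"
    using integrable_density_indicator[of UNIV] integrable_density_indicator_bernoulli[of UNIV True]
    by (simp add: mean_def integral_f bernoulli_prob_def)
  finally show ?thesis
    using False by (simp add: bernoulli_prob_def)
qed (simp add: mean_def bernoulli_prob_def)

lemma bernoulli_prob_mean_pos: "0 < bernoulli_prob mean t"
  using integral_density_bernoulli_pos[of t] by (simp add: integral_density_bernoulli)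

lemma info_integrand_support: "info_integrand x t \<noteq> 0 \<Longrightarrow> 0 < x \<and> x < 1"
  using f_support[of x] by (auto simp: info_integrand_def)

lemma integrable_info_integrand: "integrable lborel (\<lambda>x. info_integrand x t)"
  unfolding info_integrand_def
  by (rule integrable_density_mult[where B="1 + \<bar>ln (bernoulli_prob mean t)\<bar>"])
     (auto intro!: abs_mult_ln_divide_le bernoulli_prob_pos bernoulli_prob_less_1 bernoulli_prob_mean_pos)

lemma bin_joint_prob_outside:
  assumes "0 < m" "k \<notin> {1..int m}"
  shows "bin_joint_prob m k t = 0"
proof -
  have vanishes: "f x * indicator (bin m k) x = 0" for x
    using f_support[of x] ceiling_mult_in_range[of m x] assms
    by (cases "f x = 0") (auto simp: mem_bin_iff indicator_def)
  show ?thesis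
    unfolding bin_joint_prob_def vanishes by simp
qed

lemma sum_bin_prob:
  assumes "0 < m"
  shows "(\<Sum>k\<in>{1..int m}. bin_prob m k) = 1"
  using integral_eq_sum_bins[OF assms integrable_density_indicator[of UNIV]] f_support
  by (simp add: bin_prob_def integral_f)

lemma bin_prob_pos:
  assumes "0 < m" "k \<in> {1..int m}"
  shows "0 < bin_prob m k"
  unfolding bin_prob_def
  by (rule integral_pos_of_pos_on_interval[where a="(of_int k - 1) / real m" and b="of_int k / real m"])
     (use assms bin_interior[OF assms(2)] in
       \<open>auto simp: integrable_density_indicator f_nonneg f_pos divide_strict_right_mono\<close>)

lemma bin_joint_prob_pos:
  assumes "0 < m" "k \<in> {1..int m}"
  shows "0 < bin_joint_prob m k t"
  unfolding bin_joint_prob_def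
  by (rule integral_pos_of_pos_on_interval[where a="(of_int k - 1) / real m" and b="of_int k / real m"])
     (use assms bin_interior[OF assms(2)] f_mult_bernoulli_nonneg[of _ t] in
       \<open>auto simp: integrable_density_indicator_bernoulli f_pos bernoulli_prob_pos divide_strict_right_mono
               split: split_indicator\<close>)

lemma bin_info_bounds:
  fixes m :: nat and k :: int and t :: bool
  assumes m: "0 < m" and k: "k \<in> {1..int m}"
  defines "Q \<equiv> bin_joint_prob m k t" and "P \<equiv> bin_prob m k"
    and "I \<equiv> \<integral>x. info_integrand x t * indicator (bin m k) x \<partial>lborel"
  shows "Q * ln (Q / (P * bernoulli_prob mean t)) \<le> I"
    and "I \<le> Q * ln (Q / (P * bernoulli_prob mean t)) + 1 / real m * P"
proof -
  define l where "l = (of_int k - 1) / real m"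
  define u where "u = of_int k / real m"
  have "0 \<le> l" "l < u" "u \<le> 1" "u - l = 1 / real m"
    using m k by (auto simp: l_def u_def divide_simps)
  define g where "g x = f x * indicator (bin m k) x" for x
  define w where "w x = bernoulli_prob x t" for x
  define c where "c = bernoulli_prob mean t"
  \<comment> \<open>the largest value of the weight \<open>w\<close> on the bin\<close>
  define W where "W = (if t then u else 1 - l)"
  have g_nonneg: "0 \<le> g x" for x
    by (simp add: g_def f_nonneg)
  have w_bounds: "0 < w x \<and> w x \<le> W \<and> W - w x \<le> 1 / real m" if "g x \<noteq> 0" for x
  proof -
    have "0 < x" "x < 1" "l < x" "x \<le> u"
      using that f_support[of x] by (auto simp: g_def bin_def l_def u_def split: split_indicator_asm)
    then show ?thesis
      using \<open>u - l = 1 / real m\<close> by (auto simp: w_def W_def bernoulli_prob_def)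
  qed
  have "0 < W" "0 < c"
    using \<open>l < u\<close> \<open>u \<le> 1\<close> \<open>0 \<le> l\<close> by (auto simp: W_def c_def bernoulli_prob_mean_pos)
  have int_g: "integrable lborel g"
    unfolding g_def by (rule integrable_density_indicator) simp
  have int_gw: "integrable lborel (\<lambda>x. g x * w x)"
    unfolding g_def w_def by (rule integrable_density_indicator_bernoulli) simp
  have int_gwlnw: "integrable lborel (\<lambda>x. g x * (w x * ln (w x / c)))"
    unfolding g_def w_def c_def
    by (rule integrable_density_indicator_mult[where B="1 + \<bar>ln (bernoulli_prob mean t)\<bar>"])
       (auto intro!: abs_mult_ln_divide_le bernoulli_prob_pos bernoulli_prob_less_1 bernoulli_prob_mean_pos)
  have P_eq: "P = integral\<^sup>L lborel g" and Q_eq: "Q = (\<integral>x. g x * w x \<partial>lborel)"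
    by (simp_all add: P_def Q_def bin_prob_def bin_joint_prob_def g_def[abs_def] w_def)
  have I_eq: "I = (\<integral>x. g x * (w x * ln (w x / c)) \<partial>lborel)"
    by (simp add: I_def g_def w_def c_def info_integrand_def mult_ac)
  have "0 < P" "0 < Q"
    using bin_prob_pos[OF m k] bin_joint_prob_pos[OF m k] by (simp_all add: P_def Q_def)
  show "Q * ln (Q / (P * bernoulli_prob mean t)) \<le> I"
    using log_sum_integral_ge[OF int_g int_gw int_gwlnw g_nonneg _ \<open>0 < c\<close>] w_bounds \<open>0 < P\<close> \<open>0 < Q\<close>
    unfolding P_eq Q_eq I_eq c_def by blast
  show "I \<le> Q * ln (Q / (P * bernoulli_prob mean t)) + 1 / real m * P"
    using log_sum_integral_le[OF int_g int_gw int_gwlnw g_nonneg w_bounds \<open>0 < c\<close> \<open>0 < W\<close>] \<open>0 < P\<close> \<open>0 < Q\<close>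
    unfolding P_eq Q_eq I_eq c_def by blast
qed

lemma information_eq_sum_bins:
  assumes "0 < m"
  shows "information = (\<Sum>k\<in>{1..int m}. \<Sum>t\<in>UNIV. \<integral>x. info_integrand x t * indicator (bin m k) x \<partial>lborel)"
  unfolding information_def
  by (subst sum.swap) (intro sum.cong refl integral_eq_sum_bins assms integrable_info_integrand info_integrand_support)

lemma binned_information_le_information:
  assumes "0 < m"
  shows "binned_information m \<le> information"
  unfolding binned_information_def information_eq_sum_bins[OF assms]
  by (intro sum_mono bin_info_bounds(1) assms)

lemma information_le_binned_information:
  assumes "0 < m"
  shows "information \<le> binned_information m + 2 / real m"
proof -
  have "information \<le> (\<Sum>k\<in>{1..int m}. \<Sum>t\<in>UNIV.
      bin_joint_prob m k t * ln (bin_joint_prob m k t / (bin_prob m k * bernoulli_prob mean t))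
      + 1 / real m * bin_prob m k)"
    unfolding information_eq_sum_bins[OF assms]
    by (intro sum_mono bin_info_bounds(2) assms)
  also have "\<dots> = binned_information m + 2 / real m * (\<Sum>k\<in>{1..int m}. bin_prob m k)"
    by (simp add: binned_information_def sum.distrib sum_distrib_left UNIV_bool)
  finally show ?thesis
    using sum_bin_prob[OF assms] by simp
qed

end

section \<open>Bernoulli mixtures\<close>

lemma bernoulli_prob_pair_measurable [measurable]:
  "(\<lambda>z. bernoulli_prob (fst z) (snd z)) \<in> borel_measurable (lborel \<Otimes>\<^sub>M count_space UNIV)"
  unfolding bernoulli_prob_def by measurable

locale bernoulli_mixture = unit_interval_density f C + prob_space M
  for f C and M :: "'a measure" +
  fixes p :: "'a \<Rightarrow> real" and b :: "'a \<Rightarrow> bool"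
  assumes p_distributed: "distributed M lborel p f"
    and b_measurable [measurable]: "b \<in> measurable M (count_space UNIV)"
    and b_given_p: "\<And>A. A \<in> sets borel \<Longrightarrow>
      measure M {\<omega> \<in> space M. p \<omega> \<in> A \<and> b \<omega>} = expectation (\<lambda>\<omega>. indicator A (p \<omega>) * p \<omega>)"
begin

lemma p_measurable [measurable]: "p \<in> borel_measurable M"
  using distributed_measurable[OF p_distributed] by simp

lemma measure_p_in:
  assumes [measurable]: "A \<in> sets borel"
  shows "measure M {\<omega> \<in> space M. p \<omega> \<in> A} = (\<integral>x. f x * indicator A x \<partial>lborel)"
proof -
  have "(\<integral>x. f x * indicator A x \<partial>lborel) = (\<integral>\<omega>. indicator A (p \<omega>) \<partial>M)"
    by (rule distributed_integral[OF p_distributed]) (auto simp: f_nonneg)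
  also have "\<dots> = (\<integral>\<omega>. indicator {\<omega> \<in> space M. p \<omega> \<in> A} \<omega> \<partial>M)"
    by (intro Bochner_Integration.integral_cong) (auto simp: indicator_def)
  finally show ?thesis
    by (simp add: Int_absorb2)
qed

lemma measure_p_in_b_eq:
  assumes [measurable]: "A \<in> sets borel"
  shows "measure M {\<omega> \<in> space M. p \<omega> \<in> A \<and> b \<omega> = t} = (\<integral>x. f x * indicator A x * bernoulli_prob x t \<partial>lborel)"
proof -
  have success: "measure M {\<omega> \<in> space M. p \<omega> \<in> A \<and> b \<omega>} = (\<integral>x. f x * indicator A x * x \<partial>lborel)"
    using distributed_integral[OF p_distributed, of "\<lambda>x. indicator A x * x"] b_given_p[OF assms]
    by (simp add: f_nonneg mult.assoc)
  show ?thesis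
  proof (cases t)
    case False
    have "{\<omega> \<in> space M. p \<omega> \<in> A \<and> \<not> b \<omega>} = {\<omega> \<in> space M. p \<omega> \<in> A} - {\<omega> \<in> space M. p \<omega> \<in> A \<and> b \<omega>}"
      by auto
    then have "measure M {\<omega> \<in> space M. p \<omega> \<in> A \<and> \<not> b \<omega>}
        = (\<integral>x. f x * indicator A x \<partial>lborel) - (\<integral>x. f x * indicator A x * x \<partial>lborel)"
      by (simp add: finite_measure_Diff subset_iff measure_p_in success)
    also have "\<dots> = (\<integral>x. f x * indicator A x * (1 - x) \<partial>lborel)"
      using integrable_density_indicator[OF assms] integrable_density_indicator_bernoulli[OF assms, of True]
      by (simp add: bernoulli_prob_def algebra_simps)
    finally show ?thesis
      using False by (simp add: bernoulli_prob_def)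
  qed (simp add: success bernoulli_prob_def)
qed

lemma distributed_b: "distributed M (count_space UNIV) b (bernoulli_prob mean)"
proof (rule distributed_count_spaceI[OF prob_space_axioms b_measurable])
  show "measure M {\<omega> \<in> space M. b \<omega> = t} = bernoulli_prob mean t" for t
    using measure_p_in_b_eq[of UNIV t] by (simp add: integral_density_bernoulli)
  show "0 \<le> bernoulli_prob mean t" for t
    using bernoulli_prob_mean_pos by (rule less_imp_le)
qed

lemma emeasure_p_in_b_in:
  assumes [measurable]: "A \<in> sets borel"
  shows "emeasure M {\<omega> \<in> space M. p \<omega> \<in> A \<and> b \<omega> \<in> B}
    = (\<integral>\<^sup>+x. (\<integral>\<^sup>+t. ennreal (f x * bernoulli_prob x t) * indicator B t \<partial>count_space UNIV) * indicator A x \<partial>lborel)"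
proof -
  have events: "{\<omega> \<in> space M. p \<omega> \<in> A \<and> b \<omega> = t} \<in> sets M" for t
    by measurable
  have event_decomp: "{\<omega> \<in> space M. p \<omega> \<in> A \<and> b \<omega> \<in> B} = (\<Union>t\<in>B. {\<omega> \<in> space M. p \<omega> \<in> A \<and> b \<omega> = t})"
    by auto
  have "emeasure M {\<omega> \<in> space M. p \<omega> \<in> A \<and> b \<omega> \<in> B}
      = (\<Sum>t\<in>B. emeasure M {\<omega> \<in> space M. p \<omega> \<in> A \<and> b \<omega> = t})"
    unfolding event_decomp by (rule sum_emeasure[symmetric]) (use events in \<open>auto simp: disjoint_family_on_def\<close>)
  also have "\<dots> = (\<Sum>t\<in>B. ennreal (\<integral>x. f x * indicator A x * bernoulli_prob x t \<partial>lborel))"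
    by (simp add: emeasure_eq_measure measure_p_in_b_eq)
  also have "\<dots> = (\<Sum>t\<in>B. \<integral>\<^sup>+x. f x * indicator A x * bernoulli_prob x t \<partial>lborel)"
    using f_mult_bernoulli_nonneg
    by (intro sum.cong refl nn_integral_eq_integral[symmetric] integrable_density_indicator_bernoulli)
       (auto simp: indicator_def)
  also have "\<dots> = (\<integral>\<^sup>+x. (\<integral>\<^sup>+t. ennreal (f x * bernoulli_prob x t) * indicator B t \<partial>count_space UNIV) * indicator A x \<partial>lborel)"
  proof -
    have "(\<integral>\<^sup>+t. ennreal (f x * bernoulli_prob x t) * indicator B t \<partial>count_space UNIV) * indicator A x
        = (\<Sum>t\<in>B. ennreal (f x * indicator A x * bernoulli_prob x t))" for x
      by (simp add: nn_integral_count_space_indicator[symmetric] nn_integral_count_space_finite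
                    sum_distrib_right indicator_def)
    then show ?thesis
      by (simp add: nn_integral_sum)
  qed
  finally show ?thesis .
qed

lemma distributed_p_b:
  "distributed M (lborel \<Otimes>\<^sub>M count_space UNIV) (\<lambda>\<omega>. (p \<omega>, b \<omega>))
     (\<lambda>z. f (fst z) * bernoulli_prob (fst z) (snd z))"
  by (rule distributed_jointI)
     (auto simp: emeasure_p_in_b_in sigma_finite_measure_count_space_finite
                 lborel.sigma_finite_measure_axioms f_mult_bernoulli_nonneg)

lemma mutual_information_p_b:
  "mutual_information (exp 1) borel (count_space UNIV) p b = information"
proof -
  interpret information_space M "exp 1"
    by unfold_locales simp
  have borel_eq_lborel: "mutual_information (exp 1) borel (count_space UNIV) p b
      = mutual_information (exp 1) lborel (count_space UNIV) p b"
  proof -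
    have "distr M borel p = distr M lborel p"
      by (rule distr_cong) auto
    moreover have "distr M (borel \<Otimes>\<^sub>M count_space UNIV) (\<lambda>\<omega>. (p \<omega>, b \<omega>))
        = distr M (lborel \<Otimes>\<^sub>M count_space UNIV) (\<lambda>\<omega>. (p \<omega>, b \<omega>))"
      by (rule distr_cong) (auto intro!: sets_pair_measure_cong)
    ultimately show ?thesis
      by (simp add: mutual_information_def)
  qed
  have "mutual_information (exp 1) lborel (count_space UNIV) p b
      = (\<integral>z. f (fst z) * bernoulli_prob (fst z) (snd z) * log (exp 1)
            (f (fst z) * bernoulli_prob (fst z) (snd z) / (f (fst z) * bernoulli_prob mean (snd z)))
          \<partial>(lborel \<Otimes>\<^sub>M count_space UNIV))"
    by (rule mutual_information_distr[OF lborel.sigma_finite_measure_axioms sigma_finite_measure_count_space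
          p_distributed _ distributed_b _ distributed_p_b])
       (auto simp: f_nonneg f_mult_bernoulli_nonneg less_imp_le[OF bernoulli_prob_mean_pos])
  also have "\<dots> = (\<integral>z. info_integrand (fst z) (snd z) \<partial>(lborel \<Otimes>\<^sub>M count_space UNIV))"
    by (intro Bochner_Integration.integral_cong refl)
       (auto simp: info_integrand_def log_def f_nonneg order.strict_iff_order)
  also have "\<dots> = information"
    unfolding information_def
    by (rule integral_pair_count_space_finite[OF lborel.sigma_finite_measure_axioms _ integrable_info_integrand])
       (unfold info_integrand_def, measurable)
  finally show ?thesis
    using borel_eq_lborel by simp
qed

lemma bin_index_measurable [measurable]: "(\<lambda>\<omega>. \<lceil>p \<omega> * real m\<rceil>) \<in> measurable M (count_space UNIV)"
  by measurable

lemma bin_index_event: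
  assumes "0 < m"
  shows "{\<omega> \<in> space M. \<lceil>p \<omega> * real m\<rceil> = k \<and> P \<omega>} = {\<omega> \<in> space M. p \<omega> \<in> bin m k \<and> P \<omega>}"
  using mem_bin_iff[OF assms] by auto

lemma distributed_bin_index:
  assumes "0 < m"
  shows "distributed M (count_space UNIV) (\<lambda>\<omega>. \<lceil>p \<omega> * real m\<rceil>) (bin_prob m)"
proof (rule distributed_count_spaceI[OF prob_space_axioms bin_index_measurable])
  show "measure M {\<omega> \<in> space M. \<lceil>p \<omega> * real m\<rceil> = k} = bin_prob m k" for k
    using bin_index_event[OF assms, of k "\<lambda>_. True"] by (simp add: measure_p_in bin_prob_def)
  show "0 \<le> bin_prob m k" for k
    by (simp add: bin_prob_def f_nonneg)
qed

lemma distributed_bin_index_b: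
  assumes "0 < m"
  shows "distributed M (count_space UNIV \<Otimes>\<^sub>M count_space UNIV) (\<lambda>\<omega>. (\<lceil>p \<omega> * real m\<rceil>, b \<omega>))
    (\<lambda>z. bin_joint_prob m (fst z) (snd z))"
  unfolding pair_measure_countable[OF countableI_type countableI_type] UNIV_Times_UNIV
proof (rule distributed_count_spaceI[OF prob_space_axioms])
  show "(\<lambda>\<omega>. (\<lceil>p \<omega> * real m\<rceil>, b \<omega>)) \<in> measurable M (count_space UNIV)"
    unfolding UNIV_Times_UNIV[symmetric] pair_measure_countable[OF countableI_type countableI_type, symmetric]
    by measurable
  show "measure M {\<omega> \<in> space M. (\<lceil>p \<omega> * real m\<rceil>, b \<omega>) = z} = bin_joint_prob m (fst z) (snd z)" for z
    using bin_index_event[OF assms, of "fst z" "\<lambda>\<omega>. b \<omega> = snd z"]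
    by (cases z) (simp add: measure_p_in_b_eq bin_joint_prob_def)
  show "0 \<le> bin_joint_prob m (fst z) (snd z)" for z
    using f_mult_bernoulli_nonneg
    by (auto simp: bin_joint_prob_def indicator_def intro!: Bochner_Integration.integral_nonneg)
qed

lemma mutual_information_bin_index_b:
  assumes "0 < m"
  shows "mutual_information (exp 1) (count_space UNIV) (count_space UNIV) (\<lambda>\<omega>. \<lceil>p \<omega> * real m\<rceil>) b
    = binned_information m"
proof -
  interpret information_space M "exp 1"
    by unfold_locales simp
  define J where "J z = bin_joint_prob m (fst z) (snd z)
    * ln (bin_joint_prob m (fst z) (snd z) / (bin_prob m (fst z) * bernoulli_prob mean (snd z)))" for z
  have "mutual_information (exp 1) (count_space UNIV) (count_space UNIV) (\<lambda>\<omega>. \<lceil>p \<omega> * real m\<rceil>) b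
      = (\<integral>z. bin_joint_prob m (fst z) (snd z) * log (exp 1)
            (bin_joint_prob m (fst z) (snd z) / (bin_prob m (fst z) * bernoulli_prob mean (snd z)))
          \<partial>(count_space UNIV \<Otimes>\<^sub>M count_space UNIV))"
    by (rule mutual_information_distr[OF sigma_finite_measure_count_space sigma_finite_measure_count_space
          distributed_bin_index[OF assms] _ distributed_b _ distributed_bin_index_b[OF assms]])
       (auto simp: bin_prob_def f_nonneg less_imp_le[OF bernoulli_prob_mean_pos] bin_joint_prob_def
             indicator_def f_mult_bernoulli_nonneg intro!: Bochner_Integration.integral_nonneg)
  also have "\<dots> = integral\<^sup>L (count_space UNIV \<Otimes>\<^sub>M count_space UNIV) J"
    unfolding J_def log_def by simp
  also have "\<dots> = (\<Sum>z\<in>{1..int m} \<times> UNIV. J z)"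
    unfolding pair_measure_countable[OF countableI_type countableI_type] UNIV_Times_UNIV
    by (rule integral_count_space_eq_sum)
       (auto simp: J_def bin_joint_prob_outside[OF assms] mem_Times_iff simp del: atLeastAtMost_iff)
  also have "\<dots> = binned_information m"
    by (simp add: binned_information_def J_def sum.cartesian_product split_beta)
  finally show ?thesis .
qed

end

section \<open>The Beta distribution\<close>

lemma Beta_real_pos: "0 < a \<Longrightarrow> 0 < b \<Longrightarrow> 0 < Beta a (b :: real)"
  by (simp add: Beta_def Gamma_real_pos)

lemma integral_beta_density:
  fixes \<alpha> \<beta> :: real
  assumes "0 < \<alpha>" "0 < \<beta>"
  shows "integral\<^sup>L lborel (beta_density \<alpha> \<beta>) = 1"
proof -
  define g where "g x = x powr (\<alpha> - 1) * (1 - x) powr (\<beta> - 1)" for x :: real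
  \<comment> \<open>\<open>g\<close> vanishes at \<open>0\<close> and \<open>1\<close> because \<open>0 powr a = 0\<close>, even for \<open>a = 0\<close>\<close>
  have "beta_density \<alpha> \<beta> = (\<lambda>x. indicator {0..1} x * g x / Beta \<alpha> \<beta>)"
    by (auto simp: beta_density_def g_def indicator_def fun_eq_iff)
  then have "integral\<^sup>L lborel (beta_density \<alpha> \<beta>) = (LINT x : {0..1} | lborel. g x) / Beta \<alpha> \<beta>"
    by (simp add: set_lebesgue_integral_def)
  also have "(LINT x : {0..1} | lborel. g x) = Beta \<alpha> \<beta>"
    using set_borel_integral_eq_integral(2)[OF integrable_Beta[OF assms]] has_integral_Beta_real[OF assms]
    by (simp add: g_def integral_unique)
  finally show ?thesis
    using Beta_real_pos[of \<alpha> \<beta>] assms by simp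
qed

lemma unit_interval_density_beta:
  fixes \<alpha> \<beta> :: real
  assumes "1 \<le> \<alpha>" "1 \<le> \<beta>"
  shows "unit_interval_density (beta_density \<alpha> \<beta>) (1 / Beta \<alpha> \<beta>)"
proof
  have "0 < Beta \<alpha> \<beta>"
    using assms by (intro Beta_real_pos) auto
  show "beta_density \<alpha> \<beta> x \<le> 1 / Beta \<alpha> \<beta>" for x
  proof (cases "0 < x \<and> x < 1")
    case True
    then have "x powr (\<alpha> - 1) * (1 - x) powr (\<beta> - 1) \<le> 1"
      using assms by (intro mult_le_one powr_le1) auto
    then show ?thesis
      using True \<open>0 < Beta \<alpha> \<beta>\<close> by (simp add: beta_density_def divide_right_mono)
  next
    case False
    then show ?thesis
      using \<open>0 < Beta \<alpha> \<beta>\<close> by (auto simp: beta_density_def)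
  qed
  show "beta_density \<alpha> \<beta> \<in> borel_measurable borel"
    unfolding beta_density_def by measurable
  show "integral\<^sup>L lborel (beta_density \<alpha> \<beta>) = 1"
    using assms by (intro integral_beta_density) auto
qed (use assms Beta_real_pos[of \<alpha> \<beta>] in \<open>auto simp: beta_density_def split: if_splits\<close>)

theorem lemma7:
  fixes M :: "'a measure" and p :: "'a \<Rightarrow> real" and b :: "'a \<Rightarrow> bool"
    and \<alpha> \<beta> :: real and m :: nat
  assumes "prob_space M"
    and "\<alpha> \<ge> 1" and "\<beta> \<ge> 1"
    and p_beta: "distributed M lborel p (beta_density \<alpha> \<beta>)"
    and b_meas: "b \<in> measurable M (count_space UNIV)"
    and b_bern: "\<And>A. A \<in> sets borel \<Longrightarrow>
        measure M {\<omega> \<in> space M. p \<omega> \<in> A \<and> b \<omega>}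
          = prob_space.expectation M (\<lambda>\<omega>. indicator A (p \<omega>) * p \<omega>)"
    and "m \<ge> 2"
  shows "let \<delta> = 1 / real m;
             q = (\<lambda>\<omega>. \<lceil>p \<omega> / \<delta>\<rceil>);
             Ipb = prob_space.mutual_information M (exp 1) borel (count_space UNIV) p b;
             Iqb = prob_space.mutual_information M (exp 1) (count_space UNIV) (count_space UNIV) q b
         in Ipb \<ge> Iqb \<and> Iqb \<ge> Ipb - max 3 (ln (1 / \<delta>)) * \<delta>"
proof -
  interpret bernoulli_mixture "beta_density \<alpha> \<beta>" "1 / Beta \<alpha> \<beta>" M p b
    using unit_interval_density_beta assms
    by (simp add: bernoulli_mixture_def bernoulli_mixture_axioms_def)
  have "0 < m"
    using \<open>m \<ge> 2\<close> by simp
  have "2 / real m \<le> max 3 (ln (1 / (1 / real m))) * (1 / real m)"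
    using \<open>0 < m\<close> by (simp add: divide_right_mono)
  then show ?thesis
    using binned_information_le_information[OF \<open>0 < m\<close>] information_le_binned_information[OF \<open>0 < m\<close>]
    by (simp add: Let_def mutual_information_p_b mutual_information_bin_index_b[OF \<open>0 < m\<close>])
qed

end
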